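(* Let $d_{w,1}$ be a Lorentz sequence space (with $p=1$), let $(f_n)$ be the unit vector basis of $\ell_1$, and let $j\colon\ell_1\to d_{w,1}$ be the formal identity. If $T\in L(\ell_1,d_{w,1})$ is such that the set $\{Tf_n:n\in\mathbb N\}$ is almost lengthwise bounded, then for every $\varepsilon>0$ there exists $S\in L(\ell_1)$ such that $\|T-jS\|<\varepsilon$.
   Context: Let $w=(w_n)$ be a real sequence with $w_1=1$, $w_n\downarrow 0$ and $\sum_n w_n=\infty$. The Lorentz sequence space $d_{w,1}$ is the Banach space of all $x=(x_n)\in c_0$ with $\|x\|=\sum_{n}w_n x^*_n<\infty$, where $x^*=(x^*_n)$ is the non-increasing rearrangement of $(|x_n|)$. The formal identity $j\colon\ell_1\to d_{w,1}$ sends the $n$-th unit vector of $\ell_1$ to the $n$-th unit vector of $d_{w,1}$. For a vector $z=(z_i)$ and $N\in\mathbb N$, $z|_{[N,\infty)}$ is the vector with coordinates $z_i$ for $i\ge N$ and $0$ otherwise. A set $A\subseteq d_{w,1}$ is almost lengthwise bounded if for every $\varepsilon>0$ there is $N$ with $\|x^*|_{[N,\infty)}\|<\varepsilon$ for all $x\in A$. *)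

theory Defs
  imports "HOL-Analysis.Analysis"
begin

text \<open>Sequences are functions nat => real, indexed from 0 (index n here is index n+1 in the paper).\<close>

definition ell1 :: "(nat \<Rightarrow> real) set" where
  "ell1 = {x. summable (\<lambda>n. \<bar>x n\<bar>)}"

definition ell1_norm :: "(nat \<Rightarrow> real) \<Rightarrow> real" where
  "ell1_norm x = (\<Sum>n. \<bar>x n\<bar>)"

text \<open>Non-increasing rearrangement of (|x_n|) for x in c_0:
  x*_n = inf over sets F of at most n indices of sup_{i not in F} |x_i|.\<close>
definition dec_rearr :: "(nat \<Rightarrow> real) \<Rightarrow> nat \<Rightarrow> real" where
  "dec_rearr x n = Inf {(SUP i\<in>- F. \<bar>x i\<bar>) | F. finite F \<and> card F \<le> n}"

definition lorentz :: "(nat \<Rightarrow> real) \<Rightarrow> (nat \<Rightarrow> real) set" where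
  "lorentz w = {x. x \<longlonglongrightarrow> 0 \<and> summable (\<lambda>n. w n * dec_rearr x n)}"

definition lorentz_norm :: "(nat \<Rightarrow> real) \<Rightarrow> (nat \<Rightarrow> real) \<Rightarrow> real" where
  "lorentz_norm w x = (\<Sum>n. w n * dec_rearr x n)"

definition lorentz_weight :: "(nat \<Rightarrow> real) \<Rightarrow> bool" where
  "lorentz_weight w \<longleftrightarrow> w 0 = 1 \<and> decseq w \<and> w \<longlonglongrightarrow> 0 \<and> \<not> summable w"

definition unit_vec :: "nat \<Rightarrow> nat \<Rightarrow> real" where
  "unit_vec n = (\<lambda>i. if i = n then 1 else 0)"

definition linear_on_ell1 :: "((nat \<Rightarrow> real) \<Rightarrow> (nat \<Rightarrow> real)) \<Rightarrow> bool" where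
  "linear_on_ell1 T \<longleftrightarrow> (\<forall>x\<in>ell1. \<forall>y\<in>ell1. \<forall>a b::real.
      T (\<lambda>i. a * x i + b * y i) = (\<lambda>i. a * T x i + b * T y i))"

definition bounded_ell1_lorentz :: "(nat \<Rightarrow> real) \<Rightarrow> ((nat \<Rightarrow> real) \<Rightarrow> (nat \<Rightarrow> real)) \<Rightarrow> bool" where
  "bounded_ell1_lorentz w T \<longleftrightarrow> linear_on_ell1 T \<and> T ` ell1 \<subseteq> lorentz w \<and>
      (\<exists>C. \<forall>x\<in>ell1. lorentz_norm w (T x) \<le> C * ell1_norm x)"

definition bounded_ell1 :: "((nat \<Rightarrow> real) \<Rightarrow> (nat \<Rightarrow> real)) \<Rightarrow> bool" where
  "bounded_ell1 S \<longleftrightarrow> linear_on_ell1 S \<and> S ` ell1 \<subseteq> ell1 \<and>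
      (\<exists>C. \<forall>x\<in>ell1. ell1_norm (S x) \<le> C * ell1_norm x)"

definition opnorm_ell1_lorentz :: "(nat \<Rightarrow> real) \<Rightarrow> ((nat \<Rightarrow> real) \<Rightarrow> (nat \<Rightarrow> real)) \<Rightarrow> real" where
  "opnorm_ell1_lorentz w T = (SUP x\<in>{x\<in>ell1. ell1_norm x \<le> 1}. lorentz_norm w (T x))"

definition almost_lengthwise_bounded :: "(nat \<Rightarrow> real) \<Rightarrow> (nat \<Rightarrow> real) set \<Rightarrow> bool" where
  "almost_lengthwise_bounded w A \<longleftrightarrow> (\<forall>\<epsilon>>0. \<exists>N. \<forall>x\<in>A.
      lorentz_norm w (\<lambda>i. if N \<le> i then dec_rearr x i else 0) < \<epsilon>)"

end

theory Submission
  imports Defs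
begin

(* Let y_n = T f_n be the columns of T; they are bounded coordinatewise by some C. Choose N such that
   every tail y_n^*|[N,oo) has norm at most \<epsilon>/2, and split y_n = z_n + r_n where z_n keeps N largest
   coordinates of y_n. The operator S with columns z_n maps l_1 into l_1, because each z_n has at most
   N nonzero entries, all bounded by C. The columns of T - jS are the r_n, and the k-th largest
   coordinate of r_n is at most the (N+k)-th largest one of y_n; by Abel summation every weighted sum
   \<Sum>\<^sub>k w_k |r_n(g k)| along an injection g is then at most the norm of that tail. Such weighted
   sums bound the Lorentz norm and are subadditive in u = \<Sum>\<^sub>n x_n r_n, whence ||T - jS|| \<le> \<epsilon>/2. *)

lemma SUP_compl_abs_nonneg:
  fixes x :: "nat \<Rightarrow> real"
  assumes "bdd_above (range (\<lambda>i. \<bar>x i\<bar>))" and "finite F"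
  shows "0 \<le> (SUP i\<in>-F. \<bar>x i\<bar>)"
proof -
  obtain j where "j \<notin> F" using assms(2) by (meson ex_new_if_finite infinite_UNIV_nat)
  then have "\<bar>x j\<bar> \<le> (SUP i\<in>-F. \<bar>x i\<bar>)"
    by (intro cSUP_upper) (auto intro: bdd_above_mono[OF assms(1)])
  then show ?thesis by linarith
qed

lemma dec_rearr_candidates_nonempty:
  "{(SUP i\<in>-F. \<bar>x i\<bar>) |F. finite F \<and> card F \<le> k} \<noteq> {}"
proof -
  have "(SUP i\<in>-{}. \<bar>x i\<bar>) \<in> {(SUP i\<in>-F. \<bar>x i\<bar>) |F. finite F \<and> card F \<le> k}"
    by (rule CollectI, rule exI[of _ "{}"]) simp
  then show ?thesis by (metis empty_iff)
qed

lemma dec_rearr_ge: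
  assumes b: "bdd_above (range (\<lambda>i. \<bar>x i\<bar>))" and J: "finite J" "k < card J"
    and t: "\<forall>j\<in>J. t \<le> \<bar>x j\<bar>"
  shows "t \<le> dec_rearr x k"
  unfolding dec_rearr_def
proof (rule cInf_greatest)
  show "{(SUP i\<in>- F. \<bar>x i\<bar>) |F. finite F \<and> card F \<le> k} \<noteq> {}"
    by (rule dec_rearr_candidates_nonempty)
  fix s assume "s \<in> {(SUP i\<in>- F. \<bar>x i\<bar>) |F. finite F \<and> card F \<le> k}"
  then obtain F where F: "finite F" "card F \<le> k" and s: "s = (SUP i\<in>- F. \<bar>x i\<bar>)" by auto
  have "\<not> J \<subseteq> F" using card_mono[OF F(1), of J] F(2) J(2) by linarith
  then obtain j where j: "j \<in> J" "j \<notin> F" by auto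
  then have "\<bar>x j\<bar> \<le> s" unfolding s
    by (intro cSUP_upper) (auto intro: bdd_above_mono[OF b])
  moreover have "t \<le> \<bar>x j\<bar>" using t j(1) by blast
  ultimately show "t \<le> s" by linarith
qed

lemma dec_rearr_nonneg:
  assumes "bdd_above (range (\<lambda>i. \<bar>x i\<bar>))"
  shows "0 \<le> dec_rearr x k"
  by (rule dec_rearr_ge[OF assms, of "{..k}"]) auto

lemma dec_rearr_le_SUP:
  assumes b: "bdd_above (range (\<lambda>i. \<bar>x i\<bar>))" and F: "finite F" "card F \<le> k"
  shows "dec_rearr x k \<le> (SUP i\<in>-F. \<bar>x i\<bar>)"
  unfolding dec_rearr_def
proof (rule cInf_lower)
  show "bdd_below {(SUP i\<in>- F. \<bar>x i\<bar>) |F. finite F \<and> card F \<le> k}"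
    by (rule bdd_belowI[of _ 0]) (auto intro: SUP_compl_abs_nonneg[OF b])
qed (use F in auto)

lemma dec_rearr_antimono:
  assumes b: "bdd_above (range (\<lambda>i. \<bar>x i\<bar>))" and "m \<le> k"
  shows "dec_rearr x k \<le> dec_rearr x m"
  unfolding dec_rearr_def[of x m]
proof (rule cInf_greatest)
  fix s assume "s \<in> {(SUP i\<in>- F. \<bar>x i\<bar>) |F. finite F \<and> card F \<le> m}"
  then obtain F where "finite F" "card F \<le> m" and "s = (SUP i\<in>- F. \<bar>x i\<bar>)" by auto
  then show "dec_rearr x k \<le> s" using assms by (auto intro: dec_rearr_le_SUP)
qed (rule dec_rearr_candidates_nonempty)

lemma dec_rearr_approx_by_injection:
  assumes b: "bdd_above (range (\<lambda>i. \<bar>x i\<bar>))" and d: "\<delta> > 0"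
  shows "\<exists>g. inj_on g {..<K} \<and> (\<forall>k<K. dec_rearr x k \<le> \<bar>x (g k)\<bar> + \<delta>)"
proof (induction K)
  case (Suc K)
  then obtain g where g: "inj_on g {..<K}" "\<forall>k<K. dec_rearr x k \<le> \<bar>x (g k)\<bar> + \<delta>" by auto
  let ?F = "g ` {..<K}"
  have "card ?F = K" using g(1) by (simp add: card_image)
  then have up: "dec_rearr x K \<le> (SUP i\<in>-?F. \<bar>x i\<bar>)" by (intro dec_rearr_le_SUP[OF b]) auto
  have ne: "-?F \<noteq> {}" using ex_new_if_finite[OF infinite_UNIV_nat, of ?F] by auto
  have bd: "bdd_above ((\<lambda>i. \<bar>x i\<bar>) ` (-?F))" by (rule bdd_above_mono[OF b]) auto
  obtain i where i: "i \<in> -?F" "(SUP i\<in>-?F. \<bar>x i\<bar>) - \<delta> < \<bar>x i\<bar>"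
    using less_cSUP_iff[OF ne bd, of "(SUP i\<in>-?F. \<bar>x i\<bar>) - \<delta>"] d by auto
  have "inj_on (g(K := i)) {..<Suc K}"
    using g(1) i(1) unfolding inj_on_def by (auto simp: lessThan_Suc)
  moreover have "\<forall>k<Suc K. dec_rearr x k \<le> \<bar>x ((g(K := i)) k)\<bar> + \<delta>"
    using g(2) up i(2) by (auto simp: less_Suc_eq)
  ultimately show ?case by blast
qed auto

definition rearr_tail :: "(nat \<Rightarrow> real) \<Rightarrow> nat \<Rightarrow> nat \<Rightarrow> real" where
  "rearr_tail y N = (\<lambda>i. if N \<le> i then dec_rearr y i else 0)"

lemma abs_rearr_tail_le:
  assumes "bdd_above (range (\<lambda>i. \<bar>y i\<bar>))"
  shows "\<bar>rearr_tail y N i\<bar> \<le> dec_rearr y i"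
  using dec_rearr_nonneg[OF assms] by (simp add: rearr_tail_def)

lemma bdd_above_rearr_tail:
  assumes b: "bdd_above (range (\<lambda>i. \<bar>y i\<bar>))"
  shows "bdd_above (range (\<lambda>i. \<bar>rearr_tail y N i\<bar>))"
proof (rule bdd_aboveI[of _ "dec_rearr y 0"])
  fix s assume "s \<in> range (\<lambda>i. \<bar>rearr_tail y N i\<bar>)"
  then obtain i where "s = \<bar>rearr_tail y N i\<bar>" by blast
  then show "s \<le> dec_rearr y 0"
    using abs_rearr_tail_le[OF b, of N i] dec_rearr_antimono[OF b, of 0 i] by simp
qed

lemma dec_rearr_rearr_tail_le:
  assumes b: "bdd_above (range (\<lambda>i. \<bar>y i\<bar>))"
  shows "dec_rearr (rearr_tail y N) k \<le> dec_rearr y k"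
proof -
  have "dec_rearr (rearr_tail y N) k \<le> (SUP i\<in>-{..<k}. \<bar>rearr_tail y N i\<bar>)"
    by (rule dec_rearr_le_SUP[OF bdd_above_rearr_tail[OF b]]) auto
  also have "\<dots> \<le> dec_rearr y k"
  proof (rule cSUP_least)
    fix i assume "i \<in> -{..<k}"
    then show "\<bar>rearr_tail y N i\<bar> \<le> dec_rearr y k"
      using abs_rearr_tail_le[OF b, of N i] dec_rearr_antimono[OF b, of k i] by simp
  qed auto
  finally show ?thesis .
qed

lemma LIMSEQ_zero_bdd_above_abs:
  fixes x :: "nat \<Rightarrow> real"
  assumes "x \<longlonglongrightarrow> 0"
  shows "bdd_above (range (\<lambda>i. \<bar>x i\<bar>))"
proof -
  obtain K where "\<forall>n. norm (x n) \<le> K"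
    using convergent_imp_Bseq[OF convergentI[OF assms]] unfolding Bseq_def by auto
  then show ?thesis by (intro bdd_aboveI[of _ K]) auto
qed

lemma LIMSEQ_zero_attains_max_abs:
  fixes x :: "nat \<Rightarrow> real"
  assumes x: "x \<longlonglongrightarrow> 0" and A: "A \<noteq> {}"
  shows "\<exists>a\<in>A. \<forall>b\<in>A. \<bar>x b\<bar> \<le> \<bar>x a\<bar>"
proof (cases "\<exists>i\<in>A. x i \<noteq> 0")
  case True
  then obtain i where i: "i \<in> A" "x i \<noteq> 0" by auto
  have "\<forall>\<^sub>F n in sequentially. \<bar>x n\<bar> < \<bar>x i\<bar>"
    using x i(2) unfolding tendsto_iff by (simp add: dist_real_def)
  then obtain M where M: "\<forall>n\<ge>M. \<bar>x n\<bar> < \<bar>x i\<bar>" unfolding eventually_sequentially by auto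
  let ?S = "{b\<in>A. \<bar>x i\<bar> \<le> \<bar>x b\<bar>}"
  have "?S \<subseteq> {..<M}" using M by (auto simp: not_less[symmetric])
  then have fin: "finite ?S" using finite_subset by blast
  obtain a where a: "a \<in> ?S" "\<bar>x a\<bar> = Max ((\<lambda>b. \<bar>x b\<bar>) ` ?S)"
    using Max_in[of "(\<lambda>b. \<bar>x b\<bar>) ` ?S"] fin i by fastforce
  have "\<bar>x b\<bar> \<le> \<bar>x a\<bar>" if "b \<in> A" for b
    using that a fin by (cases "\<bar>x i\<bar> \<le> \<bar>x b\<bar>") auto
  then show ?thesis using a(1) by blast
qed (use A in auto)

definition largest_coords :: "(nat \<Rightarrow> real) \<Rightarrow> nat set \<Rightarrow> bool" where
  "largest_coords y F \<longleftrightarrow> finite F \<and> (\<forall>a\<in>F. \<forall>b. b \<notin> F \<longrightarrow> \<bar>y b\<bar> \<le> \<bar>y a\<bar>)"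

lemma LIMSEQ_zero_largest_coords:
  fixes x :: "nat \<Rightarrow> real"
  assumes x: "x \<longlonglongrightarrow> 0"
  shows "\<exists>F. largest_coords x F \<and> card F = N"
proof (induction N)
  case (Suc N)
  then obtain F where F: "finite F" "card F = N" "\<forall>a\<in>F. \<forall>b. b \<notin> F \<longrightarrow> \<bar>x b\<bar> \<le> \<bar>x a\<bar>"
    unfolding largest_coords_def by auto
  have "-F \<noteq> {}" using ex_new_if_finite[OF infinite_UNIV_nat F(1)] by auto
  then obtain a where a: "a \<in> -F" "\<forall>b\<in>-F. \<bar>x b\<bar> \<le> \<bar>x a\<bar>"
    using LIMSEQ_zero_attains_max_abs[OF x] by meson
  have "\<forall>c\<in>insert a F. \<forall>b. b \<notin> insert a F \<longrightarrow> \<bar>x b\<bar> \<le> \<bar>x c\<bar>"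
    using a(2) F(3) by blast
  moreover have "card (insert a F) = Suc N" using F(1,2) a(1) by simp
  ultimately show ?case using F(1) unfolding largest_coords_def by blast
qed (intro exI[of _ "{}"], simp add: largest_coords_def)

text \<open>With F the N largest coordinates of y and J outside F, the (m+1)-element set J \<union> F
  sits above the level t, so t is at most y^*_i for all i \<le> N + m.\<close>
lemma le_dec_rearr_tail_off_largest:
  fixes y :: "nat \<Rightarrow> real"
  assumes b: "bdd_above (range (\<lambda>i. \<bar>y i\<bar>))" and F: "largest_coords y F" "card F = N"
    and J: "finite J" "card J = Suc m" "J \<inter> F = {}" and t: "\<forall>j\<in>J. t \<le> \<bar>y j\<bar>"
  shows "t \<le> dec_rearr (rearr_tail y N) m"
proof -
  have fin: "finite F" and largest: "\<forall>a\<in>F. \<forall>b. b \<notin> F \<longrightarrow> \<bar>y b\<bar> \<le> \<bar>y a\<bar>"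
    using F(1) unfolding largest_coords_def by auto
  have "J \<noteq> {}" using J(2) by auto
  then obtain j0 where j0: "j0 \<in> J" "j0 \<notin> F" using J(3) by blast
  then have "\<forall>j\<in>F. t \<le> \<bar>y j\<bar>" using t largest by (meson order_trans)
  then have "\<forall>j\<in>J \<union> F. t \<le> \<bar>y j\<bar>" using t by blast
  moreover have "card (J \<union> F) = Suc m + N" using fin F(2) J by (simp add: card_Un_disjoint)
  ultimately have "t \<le> dec_rearr y i" if "i \<le> N + m" for i
    using that fin J by (intro dec_rearr_ge[OF b, of "J \<union> F"]) auto
  then show ?thesis
    by (intro dec_rearr_ge[OF bdd_above_rearr_tail[OF b], of "{N..N+m}"])
       (auto simp: rearr_tail_def intro: order_trans[OF _ abs_ge_self])
qed

lemma sum_off_largest_le_rearr_tail: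
  fixes y :: "nat \<Rightarrow> real"
  assumes b: "bdd_above (range (\<lambda>i. \<bar>y i\<bar>))" and F: "largest_coords y F" "card F = N"
    and J: "finite J" "card J = m"
  shows "(\<Sum>j\<in>J. \<bar>if j \<in> F then 0 else y j\<bar>) \<le> (\<Sum>k<m. dec_rearr (rearr_tail y N) k)"
  using J
proof (induction m arbitrary: J)
  case (Suc m)
  define r where "r j = \<bar>if j \<in> F then 0 else y j\<bar>" for j
  have "J \<noteq> {}" using Suc.prems(2) by auto
  define j0 where "j0 = arg_min_on r J"
  have j0: "j0 \<in> J" "\<forall>j\<in>J. r j0 \<le> r j"
    using arg_min_if_finite[OF Suc.prems(1) \<open>J \<noteq> {}\<close>, of r] unfolding j0_def
    by (simp_all add: not_less)
  have "r j0 \<le> dec_rearr (rearr_tail y N) m"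
  proof (cases "r j0 = 0")
    case True
    then show ?thesis using dec_rearr_nonneg[OF bdd_above_rearr_tail[OF b]] by simp
  next
    case False
    then have JF: "J \<inter> F = {}" using j0 by (force simp: r_def)
    then have "\<forall>j\<in>J. r j0 \<le> \<bar>y j\<bar>" using j0(2) by (auto simp: r_def disjoint_iff)
    then show ?thesis
      using Suc.prems JF by (intro le_dec_rearr_tail_off_largest[OF b F]) auto
  qed
  moreover have "(\<Sum>j\<in>J - {j0}. r j) \<le> (\<Sum>k<m. dec_rearr (rearr_tail y N) k)"
    using Suc.IH[of "J - {j0}"] Suc.prems j0 by (simp add: r_def)
  ultimately show ?case
    using Suc.prems(1) j0(1) by (simp add: sum.remove r_def)
qed simp

text \<open>Abel summation.\<close>
lemma weighted_sum_le_of_partial_sums_le: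
  fixes w a b :: "nat \<Rightarrow> real"
  assumes w: "decseq w" "\<And>k. 0 \<le> w k" and partial: "\<And>m. m \<le> K \<Longrightarrow> sum b {..<m} \<le> sum a {..<m}"
  shows "(\<Sum>k<K. w k * b k) \<le> (\<Sum>k<K. w k * a k)"
proof -
  have key: "w L * (sum a {..<L} - sum b {..<L}) \<le> (\<Sum>k<L. w k * (a k - b k))"
    if "L \<le> K" for L
    using that
  proof (induction L)
    case (Suc L)
    have "w (Suc L) \<le> w L" using w(1) by (simp add: decseq_Suc_iff)
    moreover have "0 \<le> sum a {..<Suc L} - sum b {..<Suc L}" using partial Suc.prems by force
    ultimately have "w (Suc L) * (sum a {..<Suc L} - sum b {..<Suc L})
        \<le> w L * (sum a {..<Suc L} - sum b {..<Suc L})"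
      by (rule mult_right_mono)
    also have "\<dots> = w L * (sum a {..<L} - sum b {..<L}) + w L * (a L - b L)"
      by (simp add: algebra_simps)
    finally show ?case using Suc by simp
  qed simp
  have "0 \<le> w K * (sum a {..<K} - sum b {..<K})" using w(2)[of K] partial[of K] by simp
  then show ?thesis using key[of K] by (simp add: algebra_simps sum_subtractf)
qed

lemma lorentz_weight_nonneg: "lorentz_weight w \<Longrightarrow> 0 \<le> w k"
  unfolding lorentz_weight_def using decseq_ge by blast

lemma summable_rearr_tail:
  assumes lw: "lorentz_weight w" and b: "bdd_above (range (\<lambda>i. \<bar>y i\<bar>))"
    and sy: "summable (\<lambda>k. w k * dec_rearr y k)"
  shows "summable (\<lambda>k. w k * dec_rearr (rearr_tail y N) k)"
  using lorentz_weight_nonneg[OF lw] dec_rearr_nonneg[OF bdd_above_rearr_tail[OF b]]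
    dec_rearr_rearr_tail_le[OF b]
  by (intro summable_comparison_test'[OF sy]) (simp add: abs_mult mult_left_mono)

lemma weighted_sum_off_largest_le_tail_norm:
  fixes y :: "nat \<Rightarrow> real"
  assumes lw: "lorentz_weight w" and y: "y \<in> lorentz w"
    and F: "largest_coords y F" "card F = N" and g: "inj_on g {..<K}"
  shows "(\<Sum>k<K. w k * \<bar>if g k \<in> F then 0 else y (g k)\<bar>) \<le> lorentz_norm w (rearr_tail y N)"
proof -
  have b: "bdd_above (range (\<lambda>i. \<bar>y i\<bar>))" and sy: "summable (\<lambda>k. w k * dec_rearr y k)"
    using y LIMSEQ_zero_bdd_above_abs unfolding lorentz_def by auto
  have "(\<Sum>k<K. w k * \<bar>if g k \<in> F then 0 else y (g k)\<bar>)
      \<le> (\<Sum>k<K. w k * dec_rearr (rearr_tail y N) k)"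
  proof (rule weighted_sum_le_of_partial_sums_le)
    show "decseq w" using lw unfolding lorentz_weight_def by auto
    fix m assume "m \<le> K"
    then have inj: "inj_on g {..<m}" using g by (auto intro: inj_on_subset)
    then have "(\<Sum>k<m. \<bar>if g k \<in> F then 0 else y (g k)\<bar>)
        = (\<Sum>j\<in>g ` {..<m}. \<bar>if j \<in> F then 0 else y j\<bar>)"
      by (simp add: sum.reindex)
    also have "\<dots> \<le> sum (dec_rearr (rearr_tail y N)) {..<m}"
      using inj by (intro sum_off_largest_le_rearr_tail[OF b F]) (auto simp: card_image)
    finally show "(\<Sum>k<m. \<bar>if g k \<in> F then 0 else y (g k)\<bar>)
        \<le> sum (dec_rearr (rearr_tail y N)) {..<m}" .
  qed (use lorentz_weight_nonneg[OF lw] in auto)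
  also have "\<dots> \<le> lorentz_norm w (rearr_tail y N)" unfolding lorentz_norm_def
    by (rule sum_le_suminf[OF summable_rearr_tail[OF lw b sy]])
       (auto intro!: mult_nonneg_nonneg lorentz_weight_nonneg[OF lw]
         dec_rearr_nonneg[OF bdd_above_rearr_tail[OF b]])
  finally show ?thesis .
qed

lemma abs_le_lorentz_norm:
  assumes lw: "lorentz_weight w" and u: "u \<in> lorentz w"
  shows "\<bar>u i\<bar> \<le> lorentz_norm w u"
proof -
  have b: "bdd_above (range (\<lambda>i. \<bar>u i\<bar>))" and su: "summable (\<lambda>n. w n * dec_rearr u n)"
    using u LIMSEQ_zero_bdd_above_abs unfolding lorentz_def by auto
  have "\<bar>u i\<bar> \<le> dec_rearr u 0" by (rule dec_rearr_ge[OF b, of "{i}"]) auto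
  also have "\<dots> = (\<Sum>k\<in>{0}. w k * dec_rearr u k)" using lw unfolding lorentz_weight_def by simp
  also have "\<dots> \<le> lorentz_norm w u" unfolding lorentz_norm_def
    by (rule sum_le_suminf[OF su])
       (auto intro!: mult_nonneg_nonneg lorentz_weight_nonneg[OF lw] dec_rearr_nonneg[OF b])
  finally show ?thesis .
qed

text \<open>Weighted sums along injections bound the Lorentz norm; this replaces the triangle
  inequality, which is awkward to prove directly for the rearrangement.\<close>
lemma lorentz_norm_le_of_injective_sums:
  assumes lw: "lorentz_weight w" and ub: "bdd_above (range (\<lambda>i. \<bar>u i\<bar>))"
    and bound: "\<And>K g. inj_on g {..<K} \<Longrightarrow> (\<Sum>k<K. w k * \<bar>u (g k)\<bar>) \<le> B"
  shows "lorentz_norm w u \<le> B"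
proof -
  have wn: "\<And>k. 0 \<le> w k" by (rule lorentz_weight_nonneg[OF lw])
  have partial: "(\<Sum>k<K. w k * dec_rearr u k) \<le> B" for K
  proof (rule field_le_epsilon)
    fix d :: real assume d: "0 < d"
    define W where "W = (\<Sum>k<K. w k)"
    have W0: "0 \<le> W" unfolding W_def by (simp add: sum_nonneg wn)
    obtain g where g: "inj_on g {..<K}" "\<forall>k<K. dec_rearr u k \<le> \<bar>u (g k)\<bar> + d / (W + 1)"
      using dec_rearr_approx_by_injection[OF ub, of "d / (W + 1)"] d W0 by auto
    have "(\<Sum>k<K. w k * dec_rearr u k) \<le> (\<Sum>k<K. w k * (\<bar>u (g k)\<bar> + d / (W + 1)))"
      using g(2) wn by (intro sum_mono mult_left_mono) auto
    also have "\<dots> = (\<Sum>k<K. w k * \<bar>u (g k)\<bar>) + d * (W / (W + 1))"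
      unfolding W_def by (simp add: algebra_simps sum.distrib sum_distrib_left sum_divide_distrib)
    also have "d * (W / (W + 1)) \<le> d" using W0 d by (intro mult_left_le) auto
    finally show "(\<Sum>k<K. w k * dec_rearr u k) \<le> B + d" using bound[OF g(1)] by simp
  qed
  have "\<And>k. 0 \<le> w k * dec_rearr u k" using wn dec_rearr_nonneg[OF ub] by simp
  then have "summable (\<lambda>k. w k * dec_rearr u k)" by (rule summableI_nonneg_bounded[OF _ partial])
  then show ?thesis unfolding lorentz_norm_def by (rule suminf_le_const[OF _ partial])
qed

lemma summable_ell1: "x \<in> ell1 \<Longrightarrow> summable (\<lambda>n. \<bar>x n\<bar>)"
  unfolding ell1_def by simp

lemma ell1_if_finite_support: "finite A \<Longrightarrow> (\<And>i. i \<notin> A \<Longrightarrow> x i = 0) \<Longrightarrow> x \<in> ell1"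
  unfolding ell1_def by (auto intro!: summable_finite)

lemma unit_vec_ell1: "unit_vec n \<in> ell1"
  by (rule ell1_if_finite_support[of "{n}"]) (auto simp: unit_vec_def)

lemma ell1_norm_unit_vec: "ell1_norm (unit_vec n) = 1"
  unfolding ell1_norm_def by (subst suminf_finite[of "{n}"]) (auto simp: unit_vec_def)

lemma ell1_weighted_sum_le:
  assumes x: "x \<in> ell1" and a: "\<And>n. \<bar>a n\<bar> \<le> c"
  shows "summable (\<lambda>n. \<bar>x n\<bar> * a n)" and "(\<Sum>n. \<bar>x n\<bar> * a n) \<le> c * ell1_norm x"
proof -
  have le: "norm (\<bar>x n\<bar> * a n) \<le> \<bar>x n\<bar> * c" for n
    using mult_left_mono[OF a[of n], of "\<bar>x n\<bar>"] by (simp add: abs_mult)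
  show sm: "summable (\<lambda>n. \<bar>x n\<bar> * a n)"
    by (rule summable_comparison_test'[OF summable_mult2[OF summable_ell1[OF x]] le])
  have "\<bar>x n\<bar> * a n \<le> \<bar>x n\<bar> * c" for n
    using mult_left_mono[OF order_trans[OF abs_ge_self a[of n]] abs_ge_zero[of "x n"]] .
  then have "(\<Sum>n. \<bar>x n\<bar> * a n) \<le> (\<Sum>n. \<bar>x n\<bar> * c)"
    by (intro suminf_le sm summable_mult2 summable_ell1[OF x])
  also have "\<dots> = c * ell1_norm x"
    unfolding ell1_norm_def using suminf_mult2[OF summable_ell1[OF x], of c] by (simp add: mult.commute)
  finally show "(\<Sum>n. \<bar>x n\<bar> * a n) \<le> c * ell1_norm x" .
qed

lemma linear_on_ell1D:
  assumes "linear_on_ell1 T" "x \<in> ell1" "y \<in> ell1"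
  shows "T (\<lambda>i. a * x i + b * y i) = (\<lambda>i. a * T x i + b * T y i)"
  using assms unfolding linear_on_ell1_def by blast

lemma linear_on_ell1_truncation:
  assumes lin: "linear_on_ell1 T"
  shows "T (\<lambda>i. if i < K then x i else 0) = (\<lambda>i. \<Sum>n<K. x n * T (unit_vec n) i)"
proof (induction K)
  case 0
  have z: "(\<lambda>i::nat. 0::real) \<in> ell1" by (rule ell1_if_finite_support[of "{}"]) auto
  show ?case using linear_on_ell1D[OF lin z z, of 0 0] by simp
next
  case (Suc K)
  have trunc: "(\<lambda>i. if i < K then x i else 0) \<in> ell1"
    by (rule ell1_if_finite_support[of "{..<K}"]) auto
  have "T (\<lambda>i. if i < Suc K then x i else 0)
      = T (\<lambda>i. 1 * (if i < K then x i else 0) + x K * unit_vec K i)"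
    by (rule arg_cong[of _ _ T]) (auto simp: unit_vec_def less_Suc_eq)
  also have "\<dots> = (\<lambda>i. 1 * T (\<lambda>i. if i < K then x i else 0) i + x K * T (unit_vec K) i)"
    by (rule linear_on_ell1D[OF lin trunc unit_vec_ell1])
  finally show ?case using Suc by simp
qed

lemma ell1_norm_tail_LIMSEQ:
  assumes x: "x \<in> ell1"
  shows "(\<lambda>K. ell1_norm (\<lambda>i. if i < K then 0 else x i)) \<longlonglongrightarrow> 0"
proof -
  have "ell1_norm (\<lambda>i. if i < K then 0 else x i) = (\<Sum>n. \<bar>x n\<bar>) - (\<Sum>n<K. \<bar>x n\<bar>)" for K
  proof -
    have "(\<lambda>n. \<bar>if n < K then 0 else x n\<bar>) = (\<lambda>n. \<bar>x n\<bar> - (if n < K then \<bar>x n\<bar> else 0))" by auto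
    moreover have sK: "summable (\<lambda>n. if n < K then \<bar>x n\<bar> else 0)"
      by (rule summable_finite[of "{..<K}"]) auto
    moreover have "(\<Sum>n. if n < K then \<bar>x n\<bar> else 0) = (\<Sum>n<K. \<bar>x n\<bar>)"
      by (subst suminf_finite[of "{..<K}"]) auto
    ultimately show ?thesis
      unfolding ell1_norm_def using suminf_diff[OF summable_ell1[OF x] sK] by simp
  qed
  then show ?thesis
    using tendsto_diff[OF tendsto_const[of "\<Sum>n. \<bar>x n\<bar>"] summable_LIMSEQ[OF summable_ell1[OF x]]]
    by simp
qed

text \<open>Coordinate functionals are continuous on d_{w,1}, so they commute with T on the
  expansion of x in the unit vectors.\<close>
lemma bounded_ell1_lorentz_coord_sums:
  assumes lw: "lorentz_weight w" and Tb: "bounded_ell1_lorentz w T" and x: "x \<in> ell1"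
  shows "(\<lambda>n. x n * T (unit_vec n) i) sums (T x i)"
proof -
  have lin: "linear_on_ell1 T" and into: "\<forall>x\<in>ell1. T x \<in> lorentz w"
    using Tb unfolding bounded_ell1_lorentz_def by auto
  obtain C where C: "\<forall>x\<in>ell1. lorentz_norm w (T x) \<le> C * ell1_norm x"
    using Tb unfolding bounded_ell1_lorentz_def by auto
  define P where "P K = (\<lambda>i. if i < K then x i else 0)" for K
  define Q where "Q K = (\<lambda>i. if i < K then 0 else x i)" for K
  have P: "P K \<in> ell1" for K unfolding P_def by (rule ell1_if_finite_support[of "{..<K}"]) auto
  have Q: "Q K \<in> ell1" for K
    unfolding ell1_def Q_def by (auto intro: summable_comparison_test'[OF summable_ell1[OF x]])
  have TQ: "T (Q K) = (\<lambda>i. T x i - T (P K) i)" for K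
  proof -
    have "T (Q K) = T (\<lambda>i. 1 * x i + (-1) * P K i)"
      by (rule arg_cong[of _ _ T]) (auto simp: P_def Q_def)
    also have "\<dots> = (\<lambda>i. 1 * T x i + (-1) * T (P K) i)" by (rule linear_on_ell1D[OF lin x P])
    finally show ?thesis by simp
  qed
  have "\<forall>K. norm (T x i - T (P K) i) \<le> C * ell1_norm (Q K)"
  proof
    fix K
    have "norm (T x i - T (P K) i) = \<bar>T (Q K) i\<bar>" using TQ by simp
    also have "\<dots> \<le> lorentz_norm w (T (Q K))" using abs_le_lorentz_norm[OF lw] into Q by blast
    also have "\<dots> \<le> C * ell1_norm (Q K)" using C Q by blast
    finally show "norm (T x i - T (P K) i) \<le> C * ell1_norm (Q K)" .
  qed
  moreover have "(\<lambda>K. C * ell1_norm (Q K)) \<longlonglongrightarrow> 0"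
    using tendsto_mult_right_zero[OF ell1_norm_tail_LIMSEQ[OF x]] unfolding Q_def by simp
  ultimately have "(\<lambda>K. T x i - T (P K) i) \<longlonglongrightarrow> 0"
    by (rule Lim_null_comparison[OF always_eventually])
  then have "(\<lambda>K. T (P K) i - T x i) \<longlonglongrightarrow> 0" using tendsto_minus by fastforce
  then have "(\<lambda>K. T (P K) i) \<longlonglongrightarrow> T x i" by (rule LIM_zero_cancel)
  then show ?thesis unfolding sums_def P_def linear_on_ell1_truncation[OF lin] .
qed

definition column_operator :: "(nat \<Rightarrow> nat \<Rightarrow> real) \<Rightarrow> (nat \<Rightarrow> real) \<Rightarrow> nat \<Rightarrow> real" where
  "column_operator z x = (\<lambda>i. \<Sum>n. x n * z n i)"

lemma summable_abs_column_operator: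
  assumes "x \<in> ell1" "\<And>n i. \<bar>z n i\<bar> \<le> C"
  shows "summable (\<lambda>n. \<bar>x n * z n i\<bar>)"
  using ell1_weighted_sum_le(1)[OF assms(1), of "\<lambda>n. \<bar>z n i\<bar>" C] assms(2)
  by (simp add: abs_mult)

lemma linear_on_ell1_column_operator:
  assumes z: "\<And>n i. \<bar>z n i\<bar> \<le> C"
  shows "linear_on_ell1 (column_operator z)"
  unfolding linear_on_ell1_def
proof (intro ballI allI)
  fix x x' a b assume x: "x \<in> ell1" and x': "x' \<in> ell1"
  have "(\<Sum>n. (a * x n + b * x' n) * z n i) = a * (\<Sum>n. x n * z n i) + b * (\<Sum>n. x' n * z n i)"
    for i
  proof -
    have "summable (\<lambda>n. x n * z n i)" "summable (\<lambda>n. x' n * z n i)"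
      using summable_abs_column_operator[of x z C] summable_abs_column_operator[of x' z C] x x' z
      by (auto intro: summable_rabs_cancel)
    then show ?thesis
      by (simp add: algebra_simps suminf_add[symmetric] suminf_mult summable_mult)
  qed
  then show "column_operator z (\<lambda>i. a * x i + b * x' i)
      = (\<lambda>i. a * column_operator z x i + b * column_operator z x' i)"
    unfolding column_operator_def by simp
qed

lemma bounded_ell1_column_operator:
  assumes z: "\<And>n I. (\<Sum>i<I. \<bar>z n i\<bar>) \<le> B"
  shows "bounded_ell1 (column_operator z)"
proof -
  have zB: "\<bar>z n i\<bar> \<le> B" for n i
  proof -
    have "0 \<le> (\<Sum>j<i. \<bar>z n j\<bar>)" by (simp add: sum_nonneg)
    moreover have "(\<Sum>j<Suc i. \<bar>z n j\<bar>) = (\<Sum>j<i. \<bar>z n j\<bar>) + \<bar>z n i\<bar>" by simp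
    ultimately show ?thesis using z[of n "Suc i"] by linarith
  qed
  have partial: "(\<Sum>i<I. \<bar>column_operator z x i\<bar>) \<le> B * ell1_norm x" if x: "x \<in> ell1" for x I
  proof -
    have sm: "summable (\<lambda>n. \<bar>x n\<bar> * \<bar>z n i\<bar>)" for i
      using summable_abs_column_operator[of x z B, OF x zB] by (simp add: abs_mult)
    have "(\<Sum>i<I. \<bar>column_operator z x i\<bar>) \<le> (\<Sum>i<I. \<Sum>n. \<bar>x n\<bar> * \<bar>z n i\<bar>)"
      using summable_rabs[OF summable_abs_column_operator[of x z B, OF x zB]]
      unfolding column_operator_def by (intro sum_mono) (simp add: abs_mult)
    also have "\<dots> = (\<Sum>n. \<Sum>i<I. \<bar>x n\<bar> * \<bar>z n i\<bar>)"
      by (rule suminf_sum[symmetric]) (rule sm)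
    also have "\<dots> = (\<Sum>n. \<bar>x n\<bar> * (\<Sum>i<I. \<bar>z n i\<bar>))"
      by (simp add: sum_distrib_left)
    also have "\<dots> \<le> B * ell1_norm x"
      using z by (intro ell1_weighted_sum_le(2)[OF x]) (simp add: sum_nonneg)
    finally show ?thesis .
  qed
  have "summable (\<lambda>i. \<bar>column_operator z x i\<bar>) \<and> ell1_norm (column_operator z x) \<le> B * ell1_norm x"
    if "x \<in> ell1" for x
    using summableI_nonneg_bounded[OF _ partial[OF that]] suminf_le_const[OF _ partial[OF that]]
    unfolding ell1_norm_def by auto
  then show ?thesis
    unfolding bounded_ell1_def ell1_def using linear_on_ell1_column_operator[OF zB] by auto
qed

lemma lorentz_norm_column_operator_le:
  assumes lw: "lorentz_weight w" and x: "x \<in> ell1" and r: "\<And>n i. \<bar>r n i\<bar> \<le> C"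
    and bound: "\<And>n K g. inj_on g {..<K} \<Longrightarrow> (\<Sum>k<K. w k * \<bar>r n (g k)\<bar>) \<le> e"
  shows "lorentz_norm w (column_operator r x) \<le> e * ell1_norm x"
proof (rule lorentz_norm_le_of_injective_sums[OF lw])
  have abs_le: "\<bar>column_operator r x i\<bar> \<le> (\<Sum>n. \<bar>x n\<bar> * \<bar>r n i\<bar>)" for i
    using summable_rabs[OF summable_abs_column_operator[of x r C, OF x r]]
    unfolding column_operator_def by (simp add: abs_mult)
  show "bdd_above (range (\<lambda>i. \<bar>column_operator r x i\<bar>))"
  proof (rule bdd_aboveI[of _ "C * ell1_norm x"])
    fix s assume "s \<in> range (\<lambda>i. \<bar>column_operator r x i\<bar>)"
    then obtain i where "s = \<bar>column_operator r x i\<bar>" by blast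
    moreover have "(\<Sum>n. \<bar>x n\<bar> * \<bar>r n i\<bar>) \<le> C * ell1_norm x"
      using r by (intro ell1_weighted_sum_le(2)[OF x]) simp
    ultimately show "s \<le> C * ell1_norm x" using abs_le[of i] by linarith
  qed
  fix K :: nat and g :: "nat \<Rightarrow> nat" assume g: "inj_on g {..<K}"
  have wn: "\<And>k. 0 \<le> w k" by (rule lorentz_weight_nonneg[OF lw])
  have sm: "summable (\<lambda>n. \<bar>x n\<bar> * \<bar>r n i\<bar>)" for i
    using summable_abs_column_operator[of x r C, OF x r] by (simp add: abs_mult)
  have "(\<Sum>k<K. w k * \<bar>column_operator r x (g k)\<bar>)
      \<le> (\<Sum>k<K. \<Sum>n. w k * (\<bar>x n\<bar> * \<bar>r n (g k)\<bar>))"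
  proof (rule sum_mono)
    fix k
    have "w k * \<bar>column_operator r x (g k)\<bar> \<le> w k * (\<Sum>n. \<bar>x n\<bar> * \<bar>r n (g k)\<bar>)"
      by (rule mult_left_mono[OF abs_le wn])
    then show "w k * \<bar>column_operator r x (g k)\<bar> \<le> (\<Sum>n. w k * (\<bar>x n\<bar> * \<bar>r n (g k)\<bar>))"
      by (simp add: suminf_mult[OF sm])
  qed
  also have "\<dots> = (\<Sum>n. \<Sum>k<K. w k * (\<bar>x n\<bar> * \<bar>r n (g k)\<bar>))"
    by (rule suminf_sum[symmetric]) (rule summable_mult[OF sm])
  also have "\<dots> = (\<Sum>n. \<bar>x n\<bar> * (\<Sum>k<K. w k * \<bar>r n (g k)\<bar>))"
    by (simp add: sum_distrib_left mult.left_commute)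
  also have "\<dots> \<le> e * ell1_norm x"
    using bound[OF g] wn by (intro ell1_weighted_sum_le(2)[OF x]) (simp add: sum_nonneg)
  finally show "(\<Sum>k<K. w k * \<bar>column_operator r x (g k)\<bar>) \<le> e * ell1_norm x" .
qed

lemma opnorm_ell1_lorentz_le:
  assumes bound: "\<And>x. x \<in> ell1 \<Longrightarrow> lorentz_norm w (T x) \<le> B * ell1_norm x" and "0 \<le> B"
  shows "opnorm_ell1_lorentz w T \<le> B"
  unfolding opnorm_ell1_lorentz_def
proof (rule cSUP_least)
  have "(\<lambda>i. 0) \<in> {x \<in> ell1. ell1_norm x \<le> 1}"
    using ell1_if_finite_support[of "{}" "\<lambda>i. 0"] by (simp add: ell1_norm_def)
  then show "{x \<in> ell1. ell1_norm x \<le> 1} \<noteq> {}" by (metis empty_iff)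
  fix x assume "x \<in> {x \<in> ell1. ell1_norm x \<le> 1}"
  then have x: "x \<in> ell1" "ell1_norm x \<le> 1" by auto
  have "B * ell1_norm x \<le> B" using x(2) \<open>0 \<le> B\<close> by (rule mult_left_le)
  then show "lorentz_norm w (T x) \<le> B" using bound[OF x(1)] by linarith
qed

lemma columns_split_off_largest:
  fixes y :: "nat \<Rightarrow> nat \<Rightarrow> real"
  assumes lw: "lorentz_weight w" and y: "\<And>n. y n \<in> lorentz w" and C: "\<And>n i. \<bar>y n i\<bar> \<le> C"
    and tail: "\<And>n. lorentz_norm w (rearr_tail (y n) N) \<le> e"
  obtains z r where "\<And>n. y n = (\<lambda>i. z n i + r n i)"
    and "\<And>n i. \<bar>z n i\<bar> \<le> C" and "\<And>n I. (\<Sum>i<I. \<bar>z n i\<bar>) \<le> real N * C"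
    and "\<And>n i. \<bar>r n i\<bar> \<le> C"
    and "\<And>n K g. inj_on g {..<K} \<Longrightarrow> (\<Sum>k<K. w k * \<bar>r n (g k)\<bar>) \<le> e"
proof -
  have "\<forall>n. \<exists>F. largest_coords (y n) F \<and> card F = N"
    using y LIMSEQ_zero_largest_coords unfolding lorentz_def by blast
  then obtain F where "\<forall>n. largest_coords (y n) (F n) \<and> card (F n) = N"
    by (rule choice[THEN exE])
  then have F: "\<And>n. largest_coords (y n) (F n)" "\<And>n. card (F n) = N" by simp_all
  have fin: "finite (F n)" for n using F(1) unfolding largest_coords_def by simp
  define z where "z n i = (if i \<in> F n then y n i else 0)" for n i
  define r where "r n i = (if i \<in> F n then 0 else y n i)" for n i
  have split: "y n = (\<lambda>i. z n i + r n i)" for n by (auto simp: z_def r_def)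
  have zC: "\<bar>z n i\<bar> \<le> C" and rC: "\<bar>r n i\<bar> \<le> C" for n i
    unfolding z_def r_def using C[of n i] C[of n 0] by auto
  have zN: "(\<Sum>i<I. \<bar>z n i\<bar>) \<le> real N * C" for n I
  proof -
    have "(\<Sum>i<I. \<bar>z n i\<bar>) = (\<Sum>i\<in>{..<I} \<inter> F n. \<bar>z n i\<bar>)"
      by (rule sum.mono_neutral_right) (auto simp: z_def)
    also have "\<dots> \<le> (\<Sum>i\<in>F n. \<bar>z n i\<bar>)" by (rule sum_mono2[OF fin]) auto
    also have "\<dots> \<le> (\<Sum>i\<in>F n. C)" by (rule sum_mono) (rule zC)
    also have "\<dots> = real N * C" using F(2) by simp
    finally show ?thesis .
  qed
  have r_tail: "(\<Sum>k<K. w k * \<bar>r n (g k)\<bar>) \<le> e" if "inj_on g {..<K}" for n K g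
    using weighted_sum_off_largest_le_tail_norm[OF lw y F that, of n] tail[of n]
    unfolding r_def by linarith
  show ?thesis by (rule that[OF split zC zN rC r_tail])
qed

lemma bounded_ell1_lorentz_column_bound:
  assumes lw: "lorentz_weight w" and Tb: "bounded_ell1_lorentz w T"
  obtains C where "\<And>n i. \<bar>T (unit_vec n) i\<bar> \<le> C"
proof -
  obtain C where C: "\<forall>x\<in>ell1. lorentz_norm w (T x) \<le> C * ell1_norm x"
    using Tb unfolding bounded_ell1_lorentz_def by auto
  have "T (unit_vec n) \<in> lorentz w" for n
    using Tb unit_vec_ell1 unfolding bounded_ell1_lorentz_def by auto
  then have "\<bar>T (unit_vec n) i\<bar> \<le> C" for n i
    using abs_le_lorentz_norm[OF lw, of "T (unit_vec n)" i] bspec[OF C unit_vec_ell1, of n]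
    by (simp add: ell1_norm_unit_vec)
  then show ?thesis by (rule that)
qed

lemma bounded_ell1_lorentz_minus_column_operator:
  assumes lw: "lorentz_weight w" and Tb: "bounded_ell1_lorentz w T"
    and split: "\<And>n. T (unit_vec n) = (\<lambda>i. z n i + r n i)"
    and zC: "\<And>n i. \<bar>z n i\<bar> \<le> C" and rC: "\<And>n i. \<bar>r n i\<bar> \<le> C" and x: "x \<in> ell1"
  shows "T x - column_operator z x = column_operator r x"
proof
  fix i
  have "summable (\<lambda>n. x n * z n i)" "summable (\<lambda>n. x n * r n i)"
    using summable_abs_column_operator[where z=z, OF x zC] summable_abs_column_operator[where z=r, OF x rC]
    by (auto intro: summable_rabs_cancel)
  then have "(\<Sum>n. x n * T (unit_vec n) i) = column_operator z x i + column_operator r x i"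
    unfolding split column_operator_def by (simp add: distrib_left suminf_add)
  then show "(T x - column_operator z x) i = column_operator r x i"
    using bounded_ell1_lorentz_coord_sums[OF lw Tb x, of i] by (simp add: sums_iff)
qed

theorem theorem6p5:
  fixes w :: "nat \<Rightarrow> real" and T :: "(nat \<Rightarrow> real) \<Rightarrow> (nat \<Rightarrow> real)"
  assumes "lorentz_weight w"
    and "bounded_ell1_lorentz w T"
    and "almost_lengthwise_bounded w (range (\<lambda>n. T (unit_vec n)))"
    and "\<epsilon> > 0"
  shows "\<exists>S. bounded_ell1 S \<and> opnorm_ell1_lorentz w (\<lambda>x. T x - S x) < \<epsilon>"
proof -
  note lw = assms(1) and Tb = assms(2)
  obtain C where yC: "\<And>n i. \<bar>T (unit_vec n) i\<bar> \<le> C"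
    using bounded_ell1_lorentz_column_bound[OF lw Tb] by blast
  have y: "T (unit_vec n) \<in> lorentz w" for n
    using Tb unit_vec_ell1 unfolding bounded_ell1_lorentz_def by auto
  have "\<epsilon> / 2 > 0" using assms(4) by simp
  then obtain N where "\<forall>y\<in>range (\<lambda>n. T (unit_vec n)). lorentz_norm w (rearr_tail y N) < \<epsilon> / 2"
    using assms(3) unfolding almost_lengthwise_bounded_def rearr_tail_def by blast
  then have N: "lorentz_norm w (rearr_tail (T (unit_vec n)) N) \<le> \<epsilon> / 2" for n
    by (meson less_imp_le rangeI)
  obtain z r where split: "\<And>n. T (unit_vec n) = (\<lambda>i. z n i + r n i)"
    and zC: "\<And>n i. \<bar>z n i\<bar> \<le> C" and zN: "\<And>n I. (\<Sum>i<I. \<bar>z n i\<bar>) \<le> real N * C"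
    and rC: "\<And>n i. \<bar>r n i\<bar> \<le> C"
    and r_small: "\<And>n K g. inj_on g {..<K} \<Longrightarrow> (\<Sum>k<K. w k * \<bar>r n (g k)\<bar>) \<le> \<epsilon> / 2"
    using columns_split_off_largest[where y = "\<lambda>n. T (unit_vec n)", OF lw y yC N] by blast
  have "lorentz_norm w (T x - column_operator z x) \<le> \<epsilon> / 2 * ell1_norm x" if "x \<in> ell1" for x
    unfolding bounded_ell1_lorentz_minus_column_operator[OF lw Tb split zC rC that]
    by (rule lorentz_norm_column_operator_le[where r=r, OF lw that rC r_small])
  then have "opnorm_ell1_lorentz w (\<lambda>x. T x - column_operator z x) \<le> \<epsilon> / 2"
    using assms(4) by (intro opnorm_ell1_lorentz_le) auto
  then show ?thesis
    using bounded_ell1_column_operator[where z=z, OF zN] assms(4) by auto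
qed

end
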